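(* Let $S$ be an anti-rectangular AG-groupoid. A nonempty subset $I\subseteq S$ is a left ideal of $S$ if and only if it is a right ideal of $S$.
   Context: An AG-groupoid is a set $S$ with a binary operation satisfying $(ab)c=(cb)a$ for all $a,b,c\in S$. It is anti-rectangular if $a=(ba)b$ for all $a,b\in S$. For nonempty subsets, $AB=\{ab:a\in A,b\in B\}$. A left ideal is a nonempty subset $I$ with $SI\subseteq I$; a right ideal is a nonempty subset $I$ with $IS\subseteq I$. *)

theory Defs
  imports Main
begin

definition AG_groupoid :: "'a set \<Rightarrow> ('a \<Rightarrow> 'a \<Rightarrow> 'a) \<Rightarrow> bool" where
  "AG_groupoid S m \<longleftrightarrow> (\<forall>a\<in>S. \<forall>b\<in>S. m a b \<in> S) \<and>
     (\<forall>a\<in>S. \<forall>b\<in>S. \<forall>c\<in>S. m (m a b) c = m (m c b) a)"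

definition anti_rectangular :: "'a set \<Rightarrow> ('a \<Rightarrow> 'a \<Rightarrow> 'a) \<Rightarrow> bool" where
  "anti_rectangular S m \<longleftrightarrow> (\<forall>a\<in>S. \<forall>b\<in>S. a = m (m b a) b)"

definition set_prod :: "('a \<Rightarrow> 'a \<Rightarrow> 'a) \<Rightarrow> 'a set \<Rightarrow> 'a set \<Rightarrow> 'a set" where
  "set_prod m A B = {m a b | a b. a \<in> A \<and> b \<in> B}"

definition left_ideal :: "'a set \<Rightarrow> ('a \<Rightarrow> 'a \<Rightarrow> 'a) \<Rightarrow> 'a set \<Rightarrow> bool" where
  "left_ideal S m I \<longleftrightarrow> I \<noteq> {} \<and> I \<subseteq> S \<and> set_prod m S I \<subseteq> I"

definition right_ideal :: "'a set \<Rightarrow> ('a \<Rightarrow> 'a \<Rightarrow> 'a) \<Rightarrow> 'a set \<Rightarrow> bool" where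
  "right_ideal S m I \<longleftrightarrow> I \<noteq> {} \<and> I \<subseteq> S \<and> set_prod m I S \<subseteq> I"

end

theory Submission
  imports Defs
begin

(* After rephrasing "SI \<subseteq> I" and "IS \<subseteq> I" as
   closure of I under multiplication by elements of S on the left resp.
   right, the two inclusions are obtained from the anti-rectangular law
   a = (ba)b, which lets one rewrite a product so that an ideal element
   sits in the absorbing position:
     - left ideal \<Longrightarrow> right ideal:  is = ((si)s)s = (ss)(si)  by the left
       invertive law, and the last product lies in SI \<subseteq> I;
     - right ideal \<Longrightarrow> left ideal:  si = (i(si))i, which lies in IS \<subseteq> I.
   Only the second direction is valid without the left invertive law. *)

lemma set_prod_subset_iff:
  "set_prod m A B \<subseteq> C \<longleftrightarrow> (\<forall>a\<in>A. \<forall>b\<in>B. m a b \<in> C)"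
  unfolding set_prod_def by blast

lemma left_ideal_iff:
  "left_ideal S m I \<longleftrightarrow> I \<noteq> {} \<and> I \<subseteq> S \<and> (\<forall>s\<in>S. \<forall>i\<in>I. m s i \<in> I)"
  unfolding left_ideal_def set_prod_subset_iff ..

lemma right_ideal_iff:
  "right_ideal S m I \<longleftrightarrow> I \<noteq> {} \<and> I \<subseteq> S \<and> (\<forall>i\<in>I. \<forall>s\<in>S. m i s \<in> I)"
  unfolding right_ideal_def set_prod_subset_iff ..

lemma anti_rectangular_AG_right_product:
  assumes "AG_groupoid S m" and "anti_rectangular S m"
    and "i \<in> S" and "s \<in> S"
  shows "m i s = m (m s s) (m s i)"
proof -
  have closed: "m s i \<in> S"
    using assms(1,3,4) unfolding AG_groupoid_def by blast
  have "i = m (m s i) s"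
    using assms(2-4) unfolding anti_rectangular_def by blast
  then have "m i s = m (m (m s i) s) s"
    by simp
  also have "\<dots> = m (m s s) (m s i)"
    using assms(1) closed assms(4) unfolding AG_groupoid_def by simp
  finally show ?thesis .
qed

text \<open>Left ideals are right ideals: \<open>is = (ss)(si) \<in> S(SI) \<subseteq> I\<close>.\<close>

lemma left_ideal_imp_right_ideal:
  assumes "AG_groupoid S m" and "anti_rectangular S m"
    and "left_ideal S m I"
  shows "right_ideal S m I"
proof -
  have I: "I \<noteq> {}" "I \<subseteq> S" and absorb: "\<And>s i. s \<in> S \<Longrightarrow> i \<in> I \<Longrightarrow> m s i \<in> I"
    using assms(3) unfolding left_ideal_iff by blast+
  have "m i s \<in> I" if "i \<in> I" and "s \<in> S" for i s
  proof -
    have "m s s \<in> S"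
      using assms(1) \<open>s \<in> S\<close> unfolding AG_groupoid_def by blast
    then have "m (m s s) (m s i) \<in> I"
      using absorb \<open>i \<in> I\<close> \<open>s \<in> S\<close> by blast
    moreover have "m i s = m (m s s) (m s i)"
      using anti_rectangular_AG_right_product[OF assms(1,2)] \<open>i \<in> I\<close> \<open>s \<in> S\<close> I(2)
      by blast
    ultimately show ?thesis by simp
  qed
  then show ?thesis
    using I unfolding right_ideal_iff by blast
qed

text \<open>Right ideals are left ideals: \<open>si = (i(si))i \<in> (IS)S \<subseteq> I\<close>.  Here only
  anti-rectangularity and closure of \<open>S\<close> are needed.\<close>

lemma right_ideal_imp_left_ideal:
  assumes closed: "\<And>a b. a \<in> S \<Longrightarrow> b \<in> S \<Longrightarrow> m a b \<in> S"
    and "anti_rectangular S m" and "right_ideal S m I"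
  shows "left_ideal S m I"
proof -
  have I: "I \<noteq> {}" "I \<subseteq> S" and absorb: "\<And>i s. i \<in> I \<Longrightarrow> s \<in> S \<Longrightarrow> m i s \<in> I"
    using assms(3) unfolding right_ideal_iff by blast+
  have "m s i \<in> I" if "s \<in> S" and "i \<in> I" for s i
  proof -
    have "i \<in> S" and si: "m s i \<in> S"
      using I(2) closed \<open>s \<in> S\<close> \<open>i \<in> I\<close> by blast+
    then have "m s i = m (m i (m s i)) i"
      using assms(2) unfolding anti_rectangular_def by blast
    also have "\<dots> \<in> I"
      using absorb[OF absorb[OF \<open>i \<in> I\<close> si] \<open>i \<in> S\<close>] .
    finally show ?thesis .
  qed
  then show ?thesis
    using I unfolding left_ideal_iff by blast
qed

theorem lemma3:
  fixes S :: "'a set" and m :: "'a \<Rightarrow> 'a \<Rightarrow> 'a" and I :: "'a set"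
  assumes "AG_groupoid S m"
    and "anti_rectangular S m"
    and "I \<noteq> {}" and "I \<subseteq> S"
  shows "left_ideal S m I \<longleftrightarrow> right_ideal S m I"
proof
  show "right_ideal S m I" if "left_ideal S m I"
    using left_ideal_imp_right_ideal[OF assms(1,2) that] .
  have closed: "\<And>a b. a \<in> S \<Longrightarrow> b \<in> S \<Longrightarrow> m a b \<in> S"
    using assms(1) unfolding AG_groupoid_def by blast
  show "left_ideal S m I" if "right_ideal S m I"
    using right_ideal_imp_left_ideal[OF closed assms(2) that] .
qed

end
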